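(* Let $$W(t)=\frac{1}{\sqrt{t^2+4t+1}}\begin{pmatrix}-t&2g(t)+1\\2g(t)+1&t\end{pmatrix}\in M_2(\mathbf C[[t]]).$$ Then $W(t)$ is, up to a sign, the unique element of $\mathrm{GL}(2,\mathbf C[[t]])$ such that (i) $W(t)^2=1$; (ii) $W(t)S_0W(t)=S_0^{-1}$; (iii) $W(t)R(t)W(t)=R(t)^{-1}$; (iv) $W(0)=\begin{pmatrix}0&1\\1&0\end{pmatrix}$.
   Context: $\mathbf C[[t]]$ is the ring of formal power series. $g(t)\in\mathbf C[[t]]$ is the power series $\frac{-1+\sqrt{1+4t}}{2}$, i.e. the unique series with zero constant term satisfying $g(t)^2+g(t)=t$; $\sqrt{t^2+4t+1}$ denotes the power series square root with constant term $1$. $S_0=\begin{pmatrix}0&-1\\1&0\end{pmatrix}$ and $R(t)=\begin{pmatrix}g(t)&1+t\\-1&-1-g(t)\end{pmatrix}$. $W(0)$ denotes the matrix of constant terms. *)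

theory Defs
  imports "HOL-Analysis.Analysis" "HOL-Computational_Algebra.Formal_Power_Series"
begin

definition mat2 :: "'a::zero \<Rightarrow> 'a \<Rightarrow> 'a \<Rightarrow> 'a \<Rightarrow> 'a ^ 2 ^ 2" where
  "mat2 a b c d = (\<chi> i j. if i = 1 then (if j = 1 then a else b) else (if j = 1 then c else d))"

definition gser :: "complex fps" where
  "gser = (THE g. g ^ 2 + g = fps_X \<and> fps_nth g 0 = 0)"

definition sqrtser :: "complex fps" where
  "sqrtser = (THE s. s ^ 2 = fps_X ^ 2 + 4 * fps_X + 1 \<and> fps_nth s 0 = 1)"

definition S0 :: "complex fps ^ 2 ^ 2" where
  "S0 = mat2 0 (-1) 1 0"

definition Rmat :: "complex fps ^ 2 ^ 2" where
  "Rmat = mat2 gser (1 + fps_X) (-1) (-1 - gser)"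

definition Wmat :: "complex fps ^ 2 ^ 2" where
  "Wmat = (\<chi> i j. inverse sqrtser * (mat2 (- fps_X) (2 * gser + 1) (2 * gser + 1) fps_X) $ i $ j)"

definition const_mat :: "complex fps ^ 2 ^ 2 \<Rightarrow> complex ^ 2 ^ 2" where
  "const_mat V = (\<chi> i j. fps_nth (V $ i $ j) 0)"

end

theory Submission imports Defs begin

(* Put t = g^2 + g, so that (2g+1)^2 = 1 + 4t and t^2 + (2g+1)^2 = s^2 for s = sqrt(t^2+4t+1).
   For an involution V the relation V A V = A^-1 says V A = A^-1 V. Reversing S0 forces
   V = [[p,q],[q,-p]]; reversing R then forces p(2g+1) = -t q, and as 2g+1 is a unit,
   V = l [[-t, 2g+1], [2g+1, t]] for some series l. Such a matrix squares to (l s)^2,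
   so V^2 = 1 leaves exactly l = 1/s or l = -1/s. Condition (iv) only fixes the sign. *)

lemma mat2_eta: "(V::'a::zero^2^2) = mat2 (V$1$1) (V$1$2) (V$2$1) (V$2$2)"
  unfolding vec_eq_iff forall_2 by (simp add: mat2_def)

lemma mat2_eq_iff: "mat2 a b c d = mat2 a' b' c' d' \<longleftrightarrow> a = a' \<and> b = b' \<and> c = c' \<and> d = d'"
  unfolding vec_eq_iff forall_2 by (simp add: mat2_def)

lemma mat2_mult:
  "mat2 a b c d ** mat2 e f g h = mat2 (a*e+b*g) (a*f+b*h) (c*e+d*g) (c*f+d*h :: 'a::semiring_1)"
  unfolding vec_eq_iff forall_2 by (simp add: mat2_def matrix_matrix_mult_def sum_2)

lemma mat2_one: "mat 1 = (mat2 1 0 0 1 :: 'a::semiring_1^2^2)"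
  unfolding vec_eq_iff forall_2 by (simp add: mat2_def mat_def)

lemma mat2_uminus: "- mat2 a b c d = mat2 (-a) (-b) (-c) (-d :: 'a::ab_group_add)"
  unfolding vec_eq_iff forall_2 by (simp add: mat2_def)

lemma matrix_inv_eqI:
  fixes A B :: "'a::semiring_1^'n^'n"
  assumes AB: "A ** B = mat 1" and BA: "B ** A = mat 1"
  shows "matrix_inv A = B"
proof -
  have "A' = B" if "A ** A' = mat 1 \<and> A' ** A = mat 1" for A'
  proof -
    have "A' = (A' ** A) ** B" using AB by (simp add: matrix_mul_assoc[symmetric])
    then show ?thesis using that by (simp add: matrix_mul_lid)
  qed
  then show ?thesis
    unfolding matrix_inv_def using AB BA by (metis (mono_tags, lifting) someI)
qed

lemma involution_conj_eq_iff:
  fixes V A B :: "'a::semiring_1^'n^'n"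
  assumes "V ** V = mat 1"
  shows "V ** A ** V = B \<longleftrightarrow> V ** A = B ** V"
proof -
  have "V ** A = V ** A ** V ** V" "B = B ** V ** V"
    using assms by (simp_all add: matrix_mul_assoc[symmetric])
  then show ?thesis by metis
qed

lemma fps_sqrt_ex1:
  fixes b :: "'a::field_char_0 fps"
  assumes "fps_nth b 0 = 1"
  shows "\<exists>!a. a ^ 2 = b \<and> fps_nth a 0 = 1"
proof -
  let ?r = "fps_radical (\<lambda>_ _. 1) 2 b"
  have "a ^ Suc 1 = b \<longleftrightarrow> a = ?r" if "fps_nth a 0 = 1" for a
    using radical_unique[of "\<lambda>_ _. 1" 1 b a] assms that by (simp add: numeral_2_eq_2)
  then show ?thesis
    by (intro ex1I[of _ ?r]) (auto simp: numeral_2_eq_2)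
qed

lemma sqrtser_props: "sqrtser ^ 2 = fps_X ^ 2 + 4 * fps_X + 1" "fps_nth sqrtser 0 = 1"
  using theI'[OF fps_sqrt_ex1[of "fps_X ^ 2 + 4 * fps_X + 1 :: complex fps"]]
  unfolding sqrtser_def by simp_all

lemma gser_ex1: "\<exists>!g::complex fps. g ^ 2 + g = fps_X \<and> fps_nth g 0 = 0"
proof (rule ex_ex1I)
  obtain e :: "complex fps" where e: "e ^ 2 = 1 + 4 * fps_X" "fps_nth e 0 = 1"
    using fps_sqrt_ex1[of "1 + 4 * fps_X"] by auto
  define g where "g = fps_const (1/2) * (e - 1)"
  have "fps_const (1/2) * 2 = (1 :: complex fps)"
    by (simp add: numeral_fps_const flip: fps_const_mult)
  then have "g ^ 2 + g = fps_X"
    unfolding g_def using e(1) by algebra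
  moreover have "fps_nth g 0 = 0"
    unfolding g_def using e(2) by simp
  ultimately show "\<exists>g::complex fps. g ^ 2 + g = fps_X \<and> fps_nth g 0 = 0"
    by blast
next
  fix g h :: "complex fps"
  assume g: "g ^ 2 + g = fps_X \<and> fps_nth g 0 = 0" and h: "h ^ 2 + h = fps_X \<and> fps_nth h 0 = 0"
  have "(g - h) * (g + h + 1) = (g ^ 2 + g) - (h ^ 2 + h)"
    by (simp add: algebra_simps power2_eq_square)
  then have "(g - h) * (g + h + 1) = 0"
    using g h by simp
  moreover have "fps_nth (g + h + 1) 0 \<noteq> 0"
    using g h by simp
  then have "g + h + 1 \<noteq> 0"
    by (metis fps_zero_nth)
  ultimately show "g = h"
    by simp
qed

lemma gser_props: "gser ^ 2 + gser = fps_X" "fps_nth gser 0 = 0"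
  using theI'[OF gser_ex1] unfolding gser_def by simp_all

lemma S0_inverse: "matrix_inv S0 = mat2 0 1 (-1) 0"
  unfolding S0_def by (intro matrix_inv_eqI) (simp_all add: mat2_mult mat2_one mat2_eq_iff)

lemma Rmat_inverse: "matrix_inv Rmat = mat2 (-1 - gser) (- (1 + fps_X)) 1 gser"
  unfolding Rmat_def gser_props(1)[symmetric]
  by (intro matrix_inv_eqI; simp only: mat2_mult mat2_one mat2_eq_iff; intro conjI; algebra)

definition W_multiple :: "complex fps \<Rightarrow> complex fps ^ 2 ^ 2" where
  "W_multiple l = mat2 (- l * fps_X) (l * (2 * gser + 1)) (l * (2 * gser + 1)) (l * fps_X)"

lemma Wmat_eq_W_multiple: "Wmat = W_multiple (inverse sqrtser)"
  unfolding Wmat_def W_multiple_def vec_eq_iff forall_2 by (simp add: mat2_def)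

lemma uminus_W_multiple: "- W_multiple l = W_multiple (- l)"
  unfolding W_multiple_def mat2_uminus by simp

lemma W_multiple_reverses_S0: "W_multiple l ** S0 = matrix_inv S0 ** W_multiple l"
  unfolding S0_inverse unfolding W_multiple_def S0_def mat2_mult mat2_eq_iff by simp

lemma W_multiple_reverses_Rmat: "W_multiple l ** Rmat = matrix_inv Rmat ** W_multiple l"
  unfolding Rmat_inverse
  unfolding W_multiple_def Rmat_def mat2_mult mat2_eq_iff gser_props(1)[symmetric]
  by (intro conjI; algebra)

lemma W_multiple_squared:
  "W_multiple l ** W_multiple l = mat2 ((l * sqrtser) ^ 2) 0 0 ((l * sqrtser) ^ 2)"
proof -
  have ls: "(l * sqrtser) ^ 2 = l ^ 2 * ((gser ^ 2 + gser) ^ 2 + 4 * (gser ^ 2 + gser) + 1)"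
    unfolding power_mult_distrib sqrtser_props(1) gser_props(1) ..
  show ?thesis
    unfolding W_multiple_def mat2_mult mat2_eq_iff gser_props(1)[symmetric] ls
    by (intro conjI; algebra)
qed

lemma W_multiple_involution_iff:
  "W_multiple l ** W_multiple l = mat 1 \<longleftrightarrow> l = inverse sqrtser \<or> l = - inverse sqrtser"
proof -
  have inv: "inverse sqrtser * sqrtser = 1"
    using sqrtser_props(2) by (simp add: inverse_mult_eq_1)
  have div: "l * sqrtser = c \<longleftrightarrow> l = c * inverse sqrtser" for c
  proof
    assume "l * sqrtser = c"
    then show "l = c * inverse sqrtser"
      using inv by (metis mult.assoc mult.commute mult_1_right)
  next
    assume "l = c * inverse sqrtser"
    then show "l * sqrtser = c"
      using inv by (simp add: mult.assoc)
  qed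
  show ?thesis
    unfolding W_multiple_squared mat2_one mat2_eq_iff power2_eq_1_iff div by simp
qed

lemma reverses_S0_Rmat_imp_W_multiple:
  assumes S0: "V ** S0 = matrix_inv S0 ** V" and R: "V ** Rmat = matrix_inv Rmat ** V"
  shows "\<exists>l. V = W_multiple l"
proof -
  obtain p q r t where V: "V = mat2 p q r t"
    using mat2_eta[of V] by blast
  have "mat2 p q r t ** mat2 0 (-1) 1 0 = mat2 0 1 (-1) 0 ** mat2 p q r t"
    using S0 unfolding V S0_inverse unfolding S0_def .
  then have "p * 0 + q * 1 = 0 * p + 1 * r \<and> p * (-1) + q * 0 = 0 * q + 1 * t"
    unfolding mat2_mult mat2_eq_iff by blast
  then have r: "r = q" and t: "t = - p"
    by simp_all
  have "mat2 p q q (- p) ** Rmat = mat2 (-1 - gser) (- (1 + fps_X)) 1 gser ** mat2 p q q (- p)"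
    using R unfolding V r t Rmat_inverse .
  then have entry_11: "p * gser + q * (-1) = (-1 - gser) * p + (- (1 + fps_X)) * q"
    unfolding Rmat_def mat2_mult mat2_eq_iff by (elim conjE)
  define a where "a = 2 * gser + 1"
  have pq: "p * a = - fps_X * q"
    unfolding a_def using entry_11 by algebra
  have a0: "fps_nth a 0 = 1"
    unfolding a_def using gser_props(2) by simp
  then have "a \<noteq> 0"
    by (metis fps_zero_nth zero_neq_one)
  define l where "l = q * inverse a"
  have q: "q = l * a"
    unfolding l_def using a0 by (simp add: mult.assoc inverse_mult_eq_1)
  have "p * a = (- l * fps_X) * a"
    using pq unfolding q by (simp add: algebra_simps)
  then have p: "p = - l * fps_X"
    using \<open>a \<noteq> 0\<close> mult_right_cancel by blast
  show ?thesis
    unfolding V r t p q a_def W_multiple_def by auto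
qed

lemma const_mat_Wmat: "const_mat Wmat = mat2 0 1 1 0"
proof -
  have "const_mat (mat2 a b c d) = mat2 (fps_nth a 0) (fps_nth b 0) (fps_nth c 0) (fps_nth d 0)"
    for a b c d :: "complex fps"
    unfolding const_mat_def vec_eq_iff forall_2 by (simp add: mat2_def)
  then show ?thesis
    unfolding Wmat_eq_W_multiple W_multiple_def using sqrtser_props(2) gser_props(2) by simp
qed

theorem lemma7p1:
  shows "invertible Wmat \<and>
         Wmat ** Wmat = mat 1 \<and>
         Wmat ** S0 ** Wmat = matrix_inv S0 \<and>
         Wmat ** Rmat ** Wmat = matrix_inv Rmat \<and>
         const_mat Wmat = mat2 0 1 1 0 \<and>
         (\<forall>V :: complex fps ^ 2 ^ 2. invertible V \<and>
              V ** V = mat 1 \<and>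
              V ** S0 ** V = matrix_inv S0 \<and>
              V ** Rmat ** V = matrix_inv Rmat \<and>
              const_mat V = mat2 0 1 1 0
            \<longrightarrow> V = Wmat \<or> V = - Wmat)"
proof -
  have WW: "Wmat ** Wmat = mat 1"
    unfolding Wmat_eq_W_multiple W_multiple_involution_iff by simp
  have "Wmat ** S0 ** Wmat = matrix_inv S0" "Wmat ** Rmat ** Wmat = matrix_inv Rmat"
    unfolding involution_conj_eq_iff[OF WW] unfolding Wmat_eq_W_multiple
    by (rule W_multiple_reverses_S0 W_multiple_reverses_Rmat)+
  moreover have "V = Wmat \<or> V = - Wmat"
    if VV: "V ** V = mat 1" and VS0: "V ** S0 ** V = matrix_inv S0"
      and VR: "V ** Rmat ** V = matrix_inv Rmat"
    for V :: "complex fps ^ 2 ^ 2"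
  proof -
    obtain l where V: "V = W_multiple l"
      using reverses_S0_Rmat_imp_W_multiple VS0 VR unfolding involution_conj_eq_iff[OF VV] by blast
    then have "l = inverse sqrtser \<or> l = - inverse sqrtser"
      using VV W_multiple_involution_iff by simp
    then show ?thesis
      unfolding V Wmat_eq_W_multiple uminus_W_multiple by auto
  qed
  moreover have "invertible Wmat"
    unfolding invertible_def using WW by blast
  ultimately show ?thesis
    using WW const_mat_Wmat by blast
qed

end
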